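(* The kernel of the linear map $\mathcal{D}(\Lambda_{n,d})\to\mathcal{D}(\Lambda_{n,d})$, $y\mapsto Xy$ (the action of $X$ on the left regular module), has dimension $n^2d$.
   Context: $k$ is an algebraically closed field; $n,d$ integers with $d\geqslant2$, $d\mid n$, $\mathrm{char}\,k\nmid n$; $q$ a primitive $d$-th root of unity. $\Lambda_{n,d}$ is the path algebra of the cyclic quiver with vertices $e_i$ and arrows $a_i:e_i\to e_{i+1}$ ($i\in\mathbb{Z}_n$) modulo all paths of length $d$; $\gamma_i^m=a_{i+m-1}\cdots a_i$. $\mathcal{D}(\Lambda_{n,d})$ is the Drinfel'd double of the Hopf algebra $\Lambda_{n,d}$; concretely it has basis $G^iX^j\gamma_\ell^m$ ($i,\ell\in\mathbb{Z}_n$, $0\leqslant j,m\leqslant d-1$) and is generated by $G,X,e_i,a_i$ with relations $G^n=1$, $X^d=0$, $GX=q^{-1}XG$, products of paths as in $\Lambda_{n,d}$, $\gamma_\ell^mG=q^{-m}G\gamma_\ell^m$, $\gamma_\ell^mX=q^{-m}X\gamma_{\ell+1}^m-q^{-m}(m)_q\gamma_{\ell+1}^{m-1}+q^{\ell+1-m}(m)_qG\gamma_{\ell+1}^{m-1}$, where $(m)_q=1+q+\cdots+q^{m-1}$. *)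

theory Defs
  imports Main "HOL-Computational_Algebra.Polynomial"
begin

definition qint :: "'k::field \<Rightarrow> nat \<Rightarrow> 'k" where
  "qint q m = (\<Sum>t<m. q ^ t)"

definition gam :: "nat \<Rightarrow> (nat \<Rightarrow> 'b::ring_1) \<Rightarrow> (nat \<Rightarrow> 'b) \<Rightarrow> nat \<Rightarrow> nat \<Rightarrow> 'b" where
  "gam n e a l m = (if m = 0 then e (l mod n)
     else prod_list (map (\<lambda>t. a ((l + t) mod n)) (rev [0..<m])))"

end

theory Submission
  imports Defs
begin

(* Since X G = q G X, left multiplication by X sends the basis vector G^i X^j gamma_l^m to
   q^i G^i X^(j+1) gamma_l^m: on the basis it is a weighted shift in j, injective with nonzero
   weights for j < d - 1 and zero for j = d - 1 because X^d = 0. Hence the kernel is spanned by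
   the n * n * d basis vectors with j = d - 1. Only the relations G X = q^-1 X G and X^d = 0,
   q^d = 1 (to get q \<noteq> 0) and the basis are needed. *)

lemma skew_commute_power:
  fixes x g c :: "'a::monoid_mult"
  assumes skew: "x * g = c * g * x" and central: "c * g = g * c"
  shows "x * g ^ i = c ^ i * g ^ i * x"
proof (induction i)
  case 0
  show ?case by simp
next
  case (Suc i)
  have "g ^ i * c = c * g ^ i"
    using central by (simp add: power_commuting_commutes)
  have "x * g ^ Suc i = (x * g ^ i) * g"
    by (simp only: power_Suc2 mult.assoc)
  also have "\<dots> = c ^ i * (g ^ i * c) * g * x"
    using Suc.IH skew by (simp add: mult.assoc)
  also have "\<dots> = c ^ i * (c * g ^ i) * g * x"
    using \<open>g ^ i * c = c * g ^ i\<close> by simp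
  also have "\<dots> = c ^ Suc i * g ^ Suc i * x"
    by (simp only: power_Suc2 mult.assoc)
  finally show ?case .
qed

lemma mult_skew_monomial:
  fixes x g c y :: "'a::monoid_mult"
  assumes "x * g = c * g * x" and "c * g = g * c"
  shows "x * (g ^ i * x ^ j * y) = c ^ i * (g ^ i * x ^ Suc j * y)"
proof -
  have "x * (g ^ i * x ^ j * y) = (x * g ^ i) * x ^ j * y"
    by (simp only: mult.assoc)
  then show ?thesis
    by (simp only: skew_commute_power[OF assms] power_Suc mult.assoc)
qed

context vector_space
begin

lemma independent_family_sum_eq_zero:
  assumes "finite J" "inj_on b J" "independent (b ` J)"
    and "(\<Sum>t\<in>J. u t *s b t) = 0" "t \<in> J"
  shows "u t = 0"
proof -
  define u' where "u' = u \<circ> the_inv_into J b"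
  have "(\<Sum>v\<in>b ` J. u' v *s v) = (\<Sum>t\<in>J. u t *s b t)"
    using assms(2) by (simp add: sum.reindex u'_def the_inv_into_f_f)
  then have "u' (b t) = 0"
    using assms by (intro independentD[of "b ` J" "b ` J"]) auto
  then show ?thesis
    using assms(2,5) by (simp add: u'_def the_inv_into_f_f)
qed

lemma dim_kernel_of_basis_shift:
  assumes f: "Vector_Spaces.linear scale scale f"
    and fin: "finite I" and inj: "inj_on b I"
    and indep: "independent (b ` I)" and spanning: "span (b ` I) = UNIV"
    and I0: "I0 \<subseteq> I" and inj_shift: "inj_on \<sigma> I0" and shift: "\<sigma> ` I0 \<subseteq> I"
    and f_shift: "\<And>t. t \<in> I0 \<Longrightarrow> f (b t) = w t *s b (\<sigma> t)"
    and weight: "\<And>t. t \<in> I0 \<Longrightarrow> w t \<noteq> 0"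
    and f_zero: "\<And>t. t \<in> I - I0 \<Longrightarrow> f (b t) = 0"
  shows "dim {y. f y = 0} = card (I - I0)"
proof (rule dim_unique[where B = "b ` (I - I0)"])
  interpret f: Vector_Spaces.linear scale scale f by fact
  show "b ` (I - I0) \<subseteq> {y. f y = 0}"
    using f_zero by auto
  show "independent (b ` (I - I0))"
    using indep by (rule independent_mono) auto
  show "card (b ` (I - I0)) = card (I - I0)"
    using inj by (intro card_image) (auto intro: inj_on_subset)
  show "{y. f y = 0} \<subseteq> span (b ` (I - I0))"
  proof
    fix y assume "y \<in> {y. f y = 0}"
    then have fy: "f y = 0" by simp
    obtain u where "y = (\<Sum>v\<in>b ` I. u v *s v)"
      using spanning span_finite[of "b ` I"] fin by auto
    then obtain c where y: "y = (\<Sum>t\<in>I. c t *s b t)"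
      using inj by (auto simp: sum.reindex)
    have "f y = (\<Sum>t\<in>I0. c t *s f (b t))"
      using fin I0 f_zero by (auto simp: y f.sum f.scale intro!: sum.mono_neutral_right)
    also have "\<dots> = (\<Sum>t\<in>I0. (c t * w t) *s (b \<circ> \<sigma>) t)"
      by (simp add: f_shift)
    finally have sum0: "(\<Sum>t\<in>I0. (c t * w t) *s (b \<circ> \<sigma>) t) = 0"
      using fy by simp
    have c0: "c t = 0" if "t \<in> I0" for t
    proof -
      have "inj_on (b \<circ> \<sigma>) I0"
        using inj_shift inj shift by (auto intro: comp_inj_on inj_on_subset)
      moreover have "independent ((b \<circ> \<sigma>) ` I0)"
        using independent_mono[OF indep] shift by (metis image_comp image_mono)
      ultimately have "c t * w t = 0"
        using independent_family_sum_eq_zero[of I0 "b \<circ> \<sigma>" "\<lambda>t. c t * w t"] fin I0 sum0 that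
        by (auto intro: finite_subset)
      then show ?thesis
        using weight that by simp
    qed
    have "y = (\<Sum>t\<in>I - I0. c t *s b t)"
      using fin I0 c0 by (auto simp: y intro!: sum.mono_neutral_right)
    also have "\<dots> \<in> span (b ` (I - I0))"
      by (intro span_sum span_scale span_base) auto
    finally show "y \<in> span (b ` (I - I0))" .
  qed
qed

end

locale central_embedding =
  fixes emb :: "'k::field \<Rightarrow> 'b::ring_1"
  assumes emb_one: "emb 1 = 1"
    and emb_add: "emb (x + y) = emb x + emb y"
    and emb_mult: "emb (x * y) = emb x * emb y"
    and emb_central: "emb x * z = z * emb x"
begin

sublocale vector_space "\<lambda>c y. emb c * y"
  by unfold_locales (simp_all add: distrib_left distrib_right emb_add emb_mult emb_one mult.assoc)

lemma emb_power: "emb (c ^ i) = emb c ^ i"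
  by (induction i) (simp_all add: emb_one emb_mult)

lemma skew_relation_swap:
  assumes "c \<noteq> 0" and skew: "y * x = emb (inverse c) * x * y"
  shows "x * y = emb c * y * x"
proof -
  have "emb c * y * x = emb c * emb (inverse c) * x * y"
    by (simp only: skew mult.assoc)
  also have "\<dots> = x * y"
    using \<open>c \<noteq> 0\<close> by (simp flip: emb_mult add: emb_one)
  finally show ?thesis ..
qed

lemma linear_mult_left: "Vector_Spaces.linear (\<lambda>c y. emb c * y) (\<lambda>c y. emb c * y) ((*) x)"
  by (simp add: Vector_Spaces.linear_iff distrib_left vector_space_axioms)
    (metis mult.assoc emb_central)

lemma dim_kernel_mult_left_skew_basis:
  fixes G X :: 'b and b :: "'i \<Rightarrow> 'b"
  defines "\<phi> \<equiv> \<lambda>(i, j, l). G ^ i * X ^ j * b l"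
  assumes skew: "X * G = emb q * G * X" and q: "q \<noteq> 0"
    and nilpotent: "X ^ d = 0" and "0 < d"
    and fin: "finite L"
    and inj: "inj_on \<phi> ({..<n} \<times> {..<d} \<times> L)"
    and indep: "independent (\<phi> ` ({..<n} \<times> {..<d} \<times> L))"
    and spanning: "span (\<phi> ` ({..<n} \<times> {..<d} \<times> L)) = UNIV"
  shows "dim {y. X * y = 0} = n * card L"
proof -
  define I where "I = {..<n} \<times> {..<d} \<times> L"
  define I0 where "I0 = {..<n} \<times> {..<d - 1} \<times> L"
  have X_phi: "X * \<phi> (i, j, l) = emb (q ^ i) * \<phi> (i, Suc j, l)" for i j l
    using mult_skew_monomial[OF skew emb_central] by (simp add: \<phi>_def emb_power)
  have "dim {y. X * y = 0} = card (I - I0)"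
  proof (rule dim_kernel_of_basis_shift[where \<sigma> = "\<lambda>(i, j, l). (i, Suc j, l)"
        and w = "\<lambda>(i, j, l). q ^ i"])
    show "I0 \<subseteq> I" "(\<lambda>(i, j, l). (i, Suc j, l)) ` I0 \<subseteq> I"
      by (auto simp: I_def I0_def)
    show "inj_on (\<lambda>(i, j, l). (i, Suc j, l)) I0"
      by (auto simp: inj_on_def)
    show "X * \<phi> t = emb ((\<lambda>(i, j, l). q ^ i) t) * \<phi> ((\<lambda>(i, j, l). (i, Suc j, l)) t)" for t
      using X_phi by (cases t) simp
    show "(\<lambda>(i, j, l). q ^ i) t \<noteq> 0" for t
      using q by (cases t) simp
    show "X * \<phi> t = 0" if "t \<in> I - I0" for t
    proof -
      obtain i l where t: "t = (i, d - 1, l)"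
        using \<open>t \<in> I - I0\<close> by (cases t) (auto simp: I_def I0_def)
      have "Suc (d - 1) = d"
        using \<open>0 < d\<close> by simp
      then show ?thesis
        using X_phi[of i "d - 1" l] by (simp add: t \<phi>_def nilpotent)
    qed
  qed (use linear_mult_left fin inj indep spanning in \<open>simp_all add: I_def\<close>)
  also have "I - I0 = {..<n} \<times> {d - 1} \<times> L"
    using \<open>0 < d\<close> by (auto simp: I_def I0_def)
  finally show ?thesis
    by (simp add: card_cartesian_product)
qed

end

theorem mainTheorem10:
  fixes emb :: "'k::field \<Rightarrow> 'b::ring_1"
    and n d :: nat and q :: 'k
    and G X :: 'b and e a :: "nat \<Rightarrow> 'b"
  assumes alg_closed: "\<forall>p::'k poly. 0 < degree p \<longrightarrow> (\<exists>x. poly p x = 0)"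
    and emb_one: "emb 1 = 1"
    and emb_add: "\<And>x y. emb (x + y) = emb x + emb y"
    and emb_mult: "\<And>x y. emb (x * y) = emb x * emb y"
    and emb_central: "\<And>x y. emb x * y = y * emb x"
    and d_ge: "d \<ge> 2" and d_dvd: "d dvd n" and char: "of_nat n \<noteq> (0::'k)"
    and q_prim: "q ^ d = 1" "\<And>j. 0 < j \<Longrightarrow> j < d \<Longrightarrow> q ^ j \<noteq> 1"
    and rel_G: "G ^ n = 1"
    and rel_X: "X ^ d = 0"
    and rel_GX: "G * X = emb (inverse q) * X * G"
    and rel_unit: "(\<Sum>l<n. e l) = 1"
    and rel_paths: "\<And>l l' m m'. l < n \<Longrightarrow> l' < n \<Longrightarrow> m < d \<Longrightarrow> m' < d \<Longrightarrow>
        gam n e a l m * gam n e a l' m' =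
          (if l = (l' + m') mod n \<and> m + m' < d then gam n e a l' (m + m') else 0)"
    and rel_pathlen: "\<And>l. l < n \<Longrightarrow> gam n e a l d = 0"
    and rel_gamG: "\<And>l m. l < n \<Longrightarrow> m < d \<Longrightarrow>
        gam n e a l m * G = emb (inverse q ^ m) * G * gam n e a l m"
    and rel_gamX: "\<And>l m. l < n \<Longrightarrow> m < d \<Longrightarrow>
        gam n e a l m * X =
          emb (inverse q ^ m) * X * gam n e a ((l + 1) mod n) m
          - emb (inverse q ^ m * qint q m) * gam n e a ((l + 1) mod n) (m - 1)
          + emb (q powi (int l + 1 - int m) * qint q m) * G * gam n e a ((l + 1) mod n) (m - 1)"
    and basis_inj: "inj_on (\<lambda>(i, j, l, m). G ^ i * X ^ j * gam n e a l m)
        ({..<n} \<times> {..<d} \<times> {..<n} \<times> {..<d})"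
    and basis_indep: "\<not> module.dependent (\<lambda>c y. emb c * y)
        ((\<lambda>(i, j, l, m). G ^ i * X ^ j * gam n e a l m) ` ({..<n} \<times> {..<d} \<times> {..<n} \<times> {..<d}))"
    and basis_span: "module.span (\<lambda>c y. emb c * y)
        ((\<lambda>(i, j, l, m). G ^ i * X ^ j * gam n e a l m) ` ({..<n} \<times> {..<d} \<times> {..<n} \<times> {..<d})) = UNIV"
  shows "vector_space.dim (\<lambda>c y. emb c * y) {y. X * y = 0} = n ^ 2 * d"
proof -
  interpret central_embedding emb
    using emb_one emb_add emb_mult emb_central by unfold_locales
  have q_nonzero: "q \<noteq> 0"
  proof
    assume "q = 0"
    with q_prim(1) d_ge show False by (simp add: power_0_left)
  qed
  have XG: "X * G = emb q * G * X"
    using q_nonzero rel_GX by (rule skew_relation_swap)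
  have basis_eq: "(\<lambda>(i, j, l, m). G ^ i * X ^ j * gam n e a l m) =
      (\<lambda>(i, j, l). G ^ i * X ^ j * (\<lambda>(l, m). gam n e a l m) l)"
    by (simp add: fun_eq_iff)
  have "dim {y. X * y = 0} = n * card ({..<n} \<times> {..<d})"
    using basis_inj basis_indep basis_span d_ge unfolding basis_eq
    by (intro dim_kernel_mult_left_skew_basis[OF XG q_nonzero rel_X]) auto
  then show ?thesis
    by (simp add: power2_eq_square)
qed

end
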